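(* Let $k \ge 3$ and let $G$ be a connected $k$-regular graph of order $n$ with $G \not\cong K_{k,k}$. If $G$ is not bipartite, then $\gamma_{\rm gr}^t(G) \ge \dfrac{n + \lceil k/2 \rceil - 2}{k-1}$; if $G$ is bipartite, then $\gamma_{\rm gr}^t(G) \ge \dfrac{n + 2\lceil k/2 \rceil - 4}{k-1}$.
   Context: $N(v)$ denotes the open neighborhood of $v$. A sequence $S=(v_1,\ldots,v_k)$ of distinct vertices of a graph $G$ without isolated vertices is a legal sequence if $N(v_i)\setminus \bigcup_{j=1}^{i-1} N(v_j)\neq\emptyset$ for every $i\in\{2,\ldots,k\}$, and a total dominating sequence if moreover $\{v_1,\ldots,v_k\}$ is a total dominating set of $G$. $\gamma_{\rm gr}^t(G)$ is the maximum length of a total dominating sequence of $G$. *)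

theory Defs
  imports Main "HOL-Library.Extended_Nat"
begin

definition simple_graph :: "'a set \<Rightarrow> ('a \<Rightarrow> 'a \<Rightarrow> bool) \<Rightarrow> bool" where
  "simple_graph V E \<longleftrightarrow> finite V \<and> (\<forall>u v. E u v \<longrightarrow> u \<in> V \<and> v \<in> V) \<and>
     (\<forall>u v. E u v \<longrightarrow> E v u) \<and> (\<forall>v. \<not> E v v)"

definition nbhd :: "'a set \<Rightarrow> ('a \<Rightarrow> 'a \<Rightarrow> bool) \<Rightarrow> 'a \<Rightarrow> 'a set" where
  "nbhd V E v = {u \<in> V. E v u}"

definition regular :: "'a set \<Rightarrow> ('a \<Rightarrow> 'a \<Rightarrow> bool) \<Rightarrow> nat \<Rightarrow> bool" where
  "regular V E k \<longleftrightarrow> (\<forall>v \<in> V. card (nbhd V E v) = k)"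

definition connected_graph :: "'a set \<Rightarrow> ('a \<Rightarrow> 'a \<Rightarrow> bool) \<Rightarrow> bool" where
  "connected_graph V E \<longleftrightarrow> V \<noteq> {} \<and> (\<forall>u \<in> V. \<forall>v \<in> V. (u, v) \<in> {(x, y). E x y}\<^sup>*)"

definition bipartite :: "'a set \<Rightarrow> ('a \<Rightarrow> 'a \<Rightarrow> bool) \<Rightarrow> bool" where
  "bipartite V E \<longleftrightarrow> (\<exists>A \<subseteq> V. \<forall>u v. E u v \<longrightarrow> (u \<in> A \<longleftrightarrow> v \<notin> A))"

definition is_complete_bipartite_kk :: "'a set \<Rightarrow> ('a \<Rightarrow> 'a \<Rightarrow> bool) \<Rightarrow> nat \<Rightarrow> bool" where
  "is_complete_bipartite_kk V E k \<longleftrightarrow> (\<exists>A B. A \<inter> B = {} \<and> A \<union> B = V \<and> card A = k \<and> card B = k \<and>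
      (\<forall>u v. E u v \<longleftrightarrow> (u \<in> A \<and> v \<in> B) \<or> (u \<in> B \<and> v \<in> A)))"

definition legal_sequence :: "'a set \<Rightarrow> ('a \<Rightarrow> 'a \<Rightarrow> bool) \<Rightarrow> 'a list \<Rightarrow> bool" where
  "legal_sequence V E S \<longleftrightarrow> distinct S \<and> set S \<subseteq> V \<and>
     (\<forall>i. 1 \<le> i \<and> i < length S \<longrightarrow>
        nbhd V E (S ! i) - (\<Union>j<i. nbhd V E (S ! j)) \<noteq> {})"

definition total_dominating_set :: "'a set \<Rightarrow> ('a \<Rightarrow> 'a \<Rightarrow> bool) \<Rightarrow> 'a set \<Rightarrow> bool" where
  "total_dominating_set V E D \<longleftrightarrow> D \<subseteq> V \<and> (\<forall>v \<in> V. \<exists>u \<in> D. E u v)"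

definition total_dominating_sequence :: "'a set \<Rightarrow> ('a \<Rightarrow> 'a \<Rightarrow> bool) \<Rightarrow> 'a list \<Rightarrow> bool" where
  "total_dominating_sequence V E S \<longleftrightarrow> legal_sequence V E S \<and> total_dominating_set V E (set S)"

definition total_grundy_dom :: "'a set \<Rightarrow> ('a \<Rightarrow> 'a \<Rightarrow> bool) \<Rightarrow> nat" where
  "total_grundy_dom V E = Max (length ` {S. total_dominating_sequence V E S})"

end

theory Submission
  imports Defs
begin

text \<open>Build a legal sequence in which every vertex after the first also has a neighbour that is
  already dominated; each such vertex newly dominates at most k - 1 vertices. A longest such
  sequence dominates everything reachable from a dominated vertex by an even walk: all of V if G is
  not bipartite, a whole colour class if it is. The extra \<lceil>k/2\<rceil> comes from the two ends of
  the sequence. Either two vertices with distinct neighbourhoods sharing at least \<lceil>k/2\<rceil>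
  neighbours can start it, so that together they dominate at most k + \<lfloor>k/2\<rfloor> vertices, or else
  the last vertex of a longest sequence newly dominates at most \<lfloor>k/2\<rfloor> vertices, since
  otherwise all neighbours of one of those vertices would have the same neighbourhood, forcing
  G \<cong> K_{k,k}. In the bipartite case one sequence is built for each colour class and the two are
  concatenated.\<close>

lemma nat_ceiling_half: "nat \<lceil>real k / 2\<rceil> = k - k div 2"
proof -
  have "\<lceil>real_of_int (int k) / real_of_int 2\<rceil> = - (- int k div 2)"
    by (rule ceiling_divide_eq_div)
  then have "\<lceil>real k / 2\<rceil> = int (k - k div 2)" by simp
  then show ?thesis by simp
qed

lemma nth_prefix_condition_snoc:
  "(\<forall>i. 1 \<le> i \<and> i < length (S @ [x]) \<longrightarrow> Q ((S @ [x]) ! i) (\<Union>j<i. f ((S @ [x]) ! j))) \<longleftrightarrow>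
   (\<forall>i. 1 \<le> i \<and> i < length S \<longrightarrow> Q (S ! i) (\<Union>j<i. f (S ! j))) \<and>
   (S \<noteq> [] \<longrightarrow> Q x (\<Union> (f ` set S)))"
proof -
  have prefix: "(\<Union>j<i. f ((S @ [x]) ! j)) = (\<Union>j<i. f (S ! j))" if "i \<le> length S" for i
    using that by (intro SUP_cong) (auto simp: nth_append)
  have whole: "(\<Union>j<length S. f (S ! j)) = \<Union> (f ` set S)"
    by (auto simp: in_set_conv_nth) (meson nth_mem)
  have "(\<forall>i. 1 \<le> i \<and> i < length (S @ [x]) \<longrightarrow> Q ((S @ [x]) ! i) (\<Union>j<i. f ((S @ [x]) ! j))) \<longleftrightarrow>
        (\<forall>i. 1 \<le> i \<and> i < length S \<longrightarrow> Q ((S @ [x]) ! i) (\<Union>j<i. f ((S @ [x]) ! j))) \<and>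
        (1 \<le> length S \<longrightarrow> Q ((S @ [x]) ! length S) (\<Union>j<length S. f ((S @ [x]) ! j)))"
    by (auto simp: less_Suc_eq)
  also have "\<dots> \<longleftrightarrow> (\<forall>i. 1 \<le> i \<and> i < length S \<longrightarrow> Q (S ! i) (\<Union>j<i. f (S ! j))) \<and>
                     (S \<noteq> [] \<longrightarrow> Q x (\<Union> (f ` set S)))"
    using prefix whole by (auto simp: nth_append Suc_le_eq)
  finally show ?thesis .
qed

lemma bound_shift_ceiling_half:
  fixes c k m :: nat
  assumes "c \<le> k + k div 2 + (k - 1) * m" and "k \<ge> 1"
  shows "c + (k - k div 2) \<le> (k - 1) * (m + 2) + 2"
proof -
  have "(k - 1) * (m + 2) = (k - 1) * m + (k - 1) * 2" by (rule distrib_left)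
  moreover have "k div 2 \<le> k" by simp
  ultimately show ?thesis using assms by linarith
qed

lemma real_bound_of_nat_bound:
  fixes a c g k m L :: nat
  assumes "c + m \<le> (k - 1) * L + a" and "L \<le> g" and "k \<ge> 2"
  shows "(real c + real m - real a) / (real k - 1) \<le> real g"
proof -
  have "real (c + m) \<le> real ((k - 1) * L + a)" using assms(1) by (simp only: of_nat_le_iff)
  then have "real c + real m - real a \<le> (real k - 1) * real L" using assms(3) by (simp add: of_nat_diff)
  also have "\<dots> \<le> (real k - 1) * real g" using assms(2,3) by (intro mult_left_mono) auto
  finally show ?thesis using assms(3) by (simp add: pos_divide_le_eq mult.commute)
qed

locale regular_graph =
  fixes V :: "'a set" and E :: "'a \<Rightarrow> 'a \<Rightarrow> bool" and k :: nat
  assumes simple: "simple_graph V E" and regular: "regular V E k" and degree_ge_3: "k \<ge> 3"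
begin

abbreviation N :: "'a \<Rightarrow> 'a set" where "N \<equiv> nbhd V E"

definition dominated :: "'a list \<Rightarrow> 'a set" where
  "dominated S = \<Union> (N ` set S)"

definition overlapping :: "'a list \<Rightarrow> bool" where
  "overlapping S \<longleftrightarrow> (\<forall>i. 1 \<le> i \<and> i < length S \<longrightarrow> N (S ! i) \<inter> (\<Union>j<i. N (S ! j)) \<noteq> {})"

lemma finite_V: "finite V"
  using simple by (simp add: simple_graph_def)

lemma edge_in_V: "E u v \<Longrightarrow> u \<in> V \<and> v \<in> V"
  using simple by (simp add: simple_graph_def)

lemma edge_sym: "E u v \<Longrightarrow> E v u"
  using simple by (simp add: simple_graph_def)

lemma edge_irrefl: "\<not> E v v"
  using simple by (simp add: simple_graph_def)

lemma nbhd_subset_V: "N v \<subseteq> V"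
  by (auto simp: nbhd_def)

lemma mem_nbhd_iff: "u \<in> N v \<longleftrightarrow> E v u"
  using edge_in_V by (auto simp: nbhd_def)

lemma finite_nbhd: "finite (N v)"
  using nbhd_subset_V finite_V finite_subset by blast

lemma card_nbhd: "v \<in> V \<Longrightarrow> card (N v) = k"
  using regular by (simp add: regular_def)

lemma nbhd_nonempty: "v \<in> V \<Longrightarrow> N v \<noteq> {}"
  using card_nbhd degree_ge_3 by fastforce

lemma nbhd_eq_of_subset: "x \<in> V \<Longrightarrow> y \<in> V \<Longrightarrow> N x \<subseteq> N y \<Longrightarrow> N x = N y"
  using card_nbhd finite_nbhd card_subset_eq by metis

lemma dominated_Nil [simp]: "dominated [] = {}"
  by (simp add: dominated_def)

lemma dominated_snoc: "dominated (S @ [x]) = dominated S \<union> N x"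
  by (auto simp: dominated_def)

lemma dominated_append: "dominated (S @ R) = dominated S \<union> dominated R"
  by (auto simp: dominated_def)

lemma dominated_subset_V: "dominated S \<subseteq> V"
  using nbhd_subset_V by (auto simp: dominated_def)

lemma finite_dominated: "finite (dominated S)"
  using dominated_subset_V finite_V finite_subset by blast

lemma nbhd_subset_dominated: "x \<in> set S \<Longrightarrow> N x \<subseteq> dominated S"
  by (auto simp: dominated_def)

lemma card_dominated_snoc: "card (dominated (S @ [x])) = card (dominated S) + card (N x - dominated S)"
proof -
  have "dominated (S @ [x]) = dominated S \<union> (N x - dominated S)"
    by (auto simp: dominated_snoc)
  moreover have "card (dominated S \<union> (N x - dominated S)) = card (dominated S) + card (N x - dominated S)"
    by (rule card_Un_disjoint) (auto intro: finite_dominated finite_nbhd)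
  ultimately show ?thesis by simp
qed

lemma legal_sequence_Nil: "legal_sequence V E []"
  by (simp add: legal_sequence_def)

lemma legal_sequence_snoc:
  "legal_sequence V E (S @ [x]) \<longleftrightarrow>
     legal_sequence V E S \<and> x \<notin> set S \<and> x \<in> V \<and> (S \<noteq> [] \<longrightarrow> N x - dominated S \<noteq> {})"
  unfolding legal_sequence_def dominated_def
  using nth_prefix_condition_snoc[of S x "\<lambda>a B. N a - B \<noteq> {}" N] by auto

lemma overlapping_Nil: "overlapping []"
  by (simp add: overlapping_def)

lemma overlapping_snoc:
  "overlapping (S @ [x]) \<longleftrightarrow> overlapping S \<and> (S \<noteq> [] \<longrightarrow> N x \<inter> dominated S \<noteq> {})"
  unfolding overlapping_def dominated_def
  using nth_prefix_condition_snoc[of S x "\<lambda>a B. N a \<inter> B \<noteq> {}" N] by auto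

lemma length_legal_sequence_le: "legal_sequence V E S \<Longrightarrow> length S \<le> card V"
  by (metis card_mono distinct_card finite_V legal_sequence_def)

lemma legal_sequence_append:
  assumes "legal_sequence V E S" "legal_sequence V E R"
    and "set S \<inter> set R = {}" "dominated S \<inter> dominated R = {}"
  shows "legal_sequence V E (S @ R)"
  using assms(2-4)
proof (induction R rule: rev_induct)
  case Nil
  then show ?case using assms(1) by simp
next
  case (snoc x R)
  have R: "legal_sequence V E R" "x \<notin> set R" "x \<in> V" "R \<noteq> [] \<longrightarrow> N x - dominated R \<noteq> {}"
    using snoc.prems(1) legal_sequence_snoc by auto
  have SR: "legal_sequence V E (S @ R)"
    using snoc.IH R(1) snoc.prems(2,3) by (auto simp: dominated_snoc)
  have disjoint: "N x \<inter> dominated S = {}"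
    using snoc.prems(3) by (auto simp: dominated_snoc)
  have "N x - dominated (S @ R) \<noteq> {}"
  proof (cases "R = []")
    case True
    then show ?thesis using nbhd_nonempty[OF R(3)] disjoint by auto
  next
    case False
    then show ?thesis using R(4) disjoint by (auto simp: dominated_append)
  qed
  then show ?case using legal_sequence_snoc[of "S @ R" x] SR R(2,3) snoc.prems(2) by auto
qed

lemma card_dominated_overlapping:
  assumes "overlapping (S @ R)" "S \<noteq> []" "set R \<subseteq> V"
  shows "card (dominated (S @ R)) \<le> card (dominated S) + (k - 1) * length R"
  using assms
proof (induction R rule: rev_induct)
  case Nil
  then show ?case by simp
next
  case (snoc x R)
  have "overlapping (S @ R)" and meets: "N x \<inter> dominated (S @ R) \<noteq> {}"
    using snoc.prems(1,2) overlapping_snoc[of "S @ R" x] by auto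
  then have IH: "card (dominated (S @ R)) \<le> card (dominated S) + (k - 1) * length R"
    using snoc.IH snoc.prems by auto
  have "card (N x \<inter> dominated (S @ R)) \<ge> 1"
    using meets finite_nbhd by (simp add: Suc_leI card_gt_0_iff)
  moreover have "card (N x - dominated (S @ R)) = card (N x) - card (N x \<inter> dominated (S @ R))"
    using finite_nbhd by (simp add: card_Diff_subset_Int)
  moreover have "card (N x) = k" using card_nbhd snoc.prems(3) by simp
  ultimately have "card (N x - dominated (S @ R)) \<le> k - 1" by simp
  then show ?case using IH card_dominated_snoc[of "S @ R" x] by simp
qed

lemma total_dominating_sequenceI:
  assumes "legal_sequence V E S" "dominated S = V"
  shows "total_dominating_sequence V E S"
proof -
  have "\<exists>u\<in>set S. E u v" if v: "v \<in> V" for v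
  proof -
    obtain u where "u \<in> set S" "v \<in> N u" using v assms(2) by (auto simp: dominated_def)
    then show ?thesis using mem_nbhd_iff by blast
  qed
  then show ?thesis using assms(1)
    by (auto simp: total_dominating_sequence_def total_dominating_set_def legal_sequence_def)
qed

lemma length_le_total_grundy_dom:
  assumes "total_dominating_sequence V E S"
  shows "length S \<le> total_grundy_dom V E"
proof -
  have "length ` {S. total_dominating_sequence V E S} \<subseteq> {..card V}"
    using length_legal_sequence_le by (auto simp: total_dominating_sequence_def)
  then have "finite (length ` {S. total_dominating_sequence V E S})"
    using finite_subset by blast
  then show ?thesis unfolding total_grundy_dom_def using assms by (intro Max_ge) auto
qed

inductive parity_walk :: "'a \<Rightarrow> bool \<Rightarrow> 'a \<Rightarrow> bool" for d where
  refl: "parity_walk d True d"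
| step: "parity_walk d b u \<Longrightarrow> E u w \<Longrightarrow> parity_walk d (\<not> b) w"

lemma parity_walk_in_V: "parity_walk d b v \<Longrightarrow> d \<in> V \<Longrightarrow> v \<in> V"
  by (induction rule: parity_walk.induct) (auto dest: edge_in_V)

lemma parity_walk_edge: "E d v \<Longrightarrow> parity_walk d False v"
  using parity_walk.step[OF parity_walk.refl] by simp

lemma parity_walk_trans:
  assumes "parity_walk a b c"
  shows "parity_walk c b' e \<Longrightarrow> parity_walk a (b = b') e"
proof (induction rule: parity_walk.induct)
  case refl
  then show ?case using assms by simp
next
  case (step b' u w)
  then show ?case using parity_walk.step by fastforce
qed

lemma parity_walk_sym: "parity_walk d b v \<Longrightarrow> parity_walk v b d"
proof (induction rule: parity_walk.induct)
  case refl
  then show ?case by (rule parity_walk.refl)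
next
  case (step b u w)
  have "parity_walk w False u" using step.hyps(2) edge_sym parity_walk_edge by blast
  from parity_walk_trans[OF this step.IH] show ?case by simp
qed

lemma connected_parity_walk:
  assumes "connected_graph V E" "u \<in> V" "v \<in> V"
  obtains b where "parity_walk u b v"
proof -
  have "(u, v) \<in> {(x, y). E x y}\<^sup>*" using assms by (auto simp: connected_graph_def)
  then have "\<exists>b. parity_walk u b v"
    by (induction rule: rtrancl_induct) (auto intro: parity_walk.intros)
  then show ?thesis using that by blast
qed

lemma parity_walk_closed:
  assumes closed: "\<And>x a b. E x a \<Longrightarrow> E x b \<Longrightarrow> a \<in> D \<Longrightarrow> b \<in> D" and "d \<in> D"
  shows "parity_walk d b v \<Longrightarrow> (b \<longrightarrow> v \<in> D) \<and> (\<not> b \<longrightarrow> (\<forall>w. E v w \<longrightarrow> w \<in> D))"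
proof (induction rule: parity_walk.induct)
  case refl
  then show ?case using \<open>d \<in> D\<close> by simp
next
  case (step b u w)
  then show ?case using closed edge_sym by (cases b) blast+
qed

lemma parity_walk_bipartite:
  assumes "\<And>u v. E u v \<Longrightarrow> u \<in> A \<longleftrightarrow> v \<notin> A"
  shows "parity_walk d b v \<Longrightarrow> v \<in> A \<longleftrightarrow> (d \<in> A \<longleftrightarrow> b)"
  by (induction rule: parity_walk.induct) (use assms in blast)+

lemma nonbipartite_even_walk:
  assumes conn: "connected_graph V E" and "\<not> bipartite V E" and d: "d \<in> V" and t: "t \<in> V"
  shows "parity_walk d True t"
proof -
  have "\<exists>v. parity_walk d True v \<and> parity_walk d False v"
  proof (rule ccontr)
    assume no_odd_cycle: "\<nexists>v. parity_walk d True v \<and> parity_walk d False v"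
    define A where "A = {v \<in> V. parity_walk d True v}"
    have side: "v \<in> A \<longleftrightarrow> b" if "parity_walk d b v" for b v
      using that no_odd_cycle parity_walk_in_V[OF that d] by (cases b) (auto simp: A_def)
    have "bipartite V E"
      unfolding bipartite_def
    proof (intro exI[of _ A] conjI allI impI)
      show "A \<subseteq> V" by (auto simp: A_def)
      fix u w assume uw: "E u w"
      obtain b where "parity_walk d b u"
        using connected_parity_walk[OF conn d] edge_in_V[OF uw] by blast
      then show "u \<in> A \<longleftrightarrow> w \<notin> A"
        using side parity_walk.step[OF _ uw] by blast
    qed
    with \<open>\<not> bipartite V E\<close> show False by simp
  qed
  then obtain v where v: "parity_walk d True v" "parity_walk d False v" by blast
  have odd_closed_walk: "parity_walk d False d"
    using parity_walk_trans[OF v(2) parity_walk_sym[OF v(1)]] by simp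
  obtain b where b: "parity_walk d b t" using connected_parity_walk[OF conn d t] .
  show ?thesis
    using b parity_walk_trans[OF odd_closed_walk b] by (cases b) simp_all
qed

lemma complete_bipartite_of_nbhds:
  assumes conn: "connected_graph V E" and "A \<inter> B = {}" "card A = k" "card B = k"
    and nbhd_A: "\<And>a. a \<in> A \<Longrightarrow> N a = B" and nbhd_B: "\<And>b. b \<in> B \<Longrightarrow> N b = A"
  shows "is_complete_bipartite_kk V E k"
proof -
  obtain a b where a: "a \<in> A" and b: "b \<in> B"
    using \<open>card A = k\<close> \<open>card B = k\<close> degree_ge_3 by fastforce
  have A_sub: "A \<subseteq> V" and B_sub: "B \<subseteq> V"
    using nbhd_A[OF a] nbhd_B[OF b] nbhd_subset_V by metis+
  have edge_iff: "E u v \<longleftrightarrow> (u \<in> A \<and> v \<in> B) \<or> (u \<in> B \<and> v \<in> A)" if "u \<in> A \<union> B" for u v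
    using that nbhd_A nbhd_B mem_nbhd_iff by blast
  have "v \<in> A \<union> B" if "v \<in> V" for v
  proof -
    have "(a, v) \<in> {(x, y). E x y}\<^sup>*"
      using conn a A_sub that by (auto simp: connected_graph_def)
    then show ?thesis
      by (induction rule: rtrancl_induct) (use a edge_iff in auto)
  qed
  then have "A \<union> B = V" using A_sub B_sub by blast
  moreover have "E u v \<longleftrightarrow> (u \<in> A \<and> v \<in> B) \<or> (u \<in> B \<and> v \<in> A)" for u v
    using edge_iff[of u v] edge_in_V \<open>A \<union> B = V\<close> by blast
  ultimately show ?thesis
    unfolding is_complete_bipartite_kk_def using assms(2-4) by blast
qed

lemma complete_bipartite_of_twin_nbhd:
  assumes conn: "connected_graph V E" and u: "u \<in> V" and w: "w \<in> N u"
    and twins: "\<And>w'. w' \<in> N u \<Longrightarrow> N w' = N w"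
  shows "is_complete_bipartite_kk V E k"
proof (rule complete_bipartite_of_nbhds[OF conn, where A = "N w" and B = "N u"])
  show nbhd_B: "N b = N w" if "b \<in> N u" for b
    using twins that .
  show nbhd_A: "N a = N u" if a: "a \<in> N w" for a
  proof -
    have "N u \<subseteq> N a" using nbhd_B a edge_sym mem_nbhd_iff by blast
    moreover have "a \<in> V" using a nbhd_subset_V by blast
    ultimately show ?thesis using nbhd_eq_of_subset u by metis
  qed
  show "N w \<inter> N u = {}"
    using nbhd_A edge_irrefl mem_nbhd_iff by blast
  show "card (N w) = k" "card (N u) = k"
    using card_nbhd u w nbhd_subset_V by auto
qed

end

text \<open>C is the set of vertices that may be chosen and T the set of vertices they are to dominate:
  the two colour classes of a bipartite graph (in either order), otherwise C = T = V.\<close>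
locale dominating_side = regular_graph +
  fixes C T :: "'a set"
  assumes C_subset_V: "C \<subseteq> V" and T_subset_V: "T \<subseteq> V" and T_nonempty: "T \<noteq> {}"
    and nbhd_C: "x \<in> C \<Longrightarrow> N x \<subseteq> T"
    and edge_T: "t \<in> T \<Longrightarrow> E t w \<Longrightarrow> w \<in> C"
    and even_walk_T: "d \<in> T \<Longrightarrow> t \<in> T \<Longrightarrow> parity_walk d True t"
begin

definition admissible :: "'a list \<Rightarrow> bool" where
  "admissible S \<longleftrightarrow> legal_sequence V E S \<and> overlapping S \<and> set S \<subseteq> C"

lemma admissible_snoc:
  "admissible (S @ [x]) \<longleftrightarrow> admissible S \<and> x \<notin> set S \<and> x \<in> V \<and> x \<in> C \<and>
     (S \<noteq> [] \<longrightarrow> N x - dominated S \<noteq> {} \<and> N x \<inter> dominated S \<noteq> {})"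
  unfolding admissible_def using legal_sequence_snoc overlapping_snoc by auto

lemma admissible_singleton: "x \<in> C \<Longrightarrow> admissible [x]"
  using admissible_snoc[of "[]" x] C_subset_V
  by (auto simp: admissible_def legal_sequence_Nil overlapping_Nil)

lemma dominated_subset_T: "admissible S \<Longrightarrow> dominated S \<subseteq> T"
  using nbhd_C by (auto simp: admissible_def dominated_def)

lemma exists_longest_admissible:
  assumes "P S\<^sub>0" "\<And>S. P S \<Longrightarrow> admissible S"
  obtains S where "P S" "\<And>S'. P S' \<Longrightarrow> length S' \<le> length S"
proof -
  have "\<forall>S. P S \<longrightarrow> length S < Suc (card V)"
    using assms(2) length_legal_sequence_le by (auto simp: admissible_def less_Suc_eq_le)
  then show ?thesis
    using ex_has_greatest_nat[of P S\<^sub>0 length] assms(1) that by blast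
qed

text \<open>An even walk inside T from a dominated to an undominated vertex must leave the dominated set
  at some step: the middle vertex of that step is a valid next choice.\<close>
lemma maximal_admissible_dominates_T:
  assumes adm: "admissible S" and "S \<noteq> []" and maximal: "\<And>x. \<not> admissible (S @ [x])"
  shows "dominated S = T"
proof (rule ccontr)
  assume "dominated S \<noteq> T"
  with dominated_subset_T[OF adm] obtain t where t: "t \<in> T" "t \<notin> dominated S" by blast
  obtain s where s: "s \<in> set S" using \<open>S \<noteq> []\<close> by (cases S) auto
  then have "s \<in> V" using adm by (auto simp: admissible_def legal_sequence_def)
  then obtain d where "d \<in> N s" using nbhd_nonempty by blast
  then have d: "d \<in> dominated S" using s nbhd_subset_dominated by blast
  have "\<exists>x a b. E x a \<and> E x b \<and> a \<in> dominated S \<and> b \<notin> dominated S"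
  proof (rule ccontr)
    assume "\<not> ?thesis"
    then have closed: "\<And>x a b. E x a \<Longrightarrow> E x b \<Longrightarrow> a \<in> dominated S \<Longrightarrow> b \<in> dominated S"
      by blast
    have "parity_walk d True t" using even_walk_T d t dominated_subset_T[OF adm] by blast
    from parity_walk_closed[OF closed d this] show False using t by simp
  qed
  then obtain x a b where xab: "E x a" "E x b" "a \<in> dominated S" "b \<notin> dominated S" by blast
  have "x \<in> C" using edge_T xab(1,3) dominated_subset_T[OF adm] edge_sym by blast
  moreover have "x \<in> V" using edge_in_V xab(1) by blast
  moreover have "x \<notin> set S" using nbhd_subset_dominated xab(2,4) mem_nbhd_iff by blast
  moreover have "b \<in> N x - dominated S" "a \<in> N x \<inter> dominated S" using xab mem_nbhd_iff by auto
  ultimately have "admissible (S @ [x])" using admissible_snoc adm \<open>S \<noteq> []\<close> by blast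
  with maximal show False by blast
qed

lemma sequence_from_close_pair:
  assumes x: "x \<in> C" and y: "y \<in> C" and "N x \<noteq> N y"
    and close: "k - k div 2 \<le> card (N x \<inter> N y)"
  shows "\<exists>S. legal_sequence V E S \<and> set S \<subseteq> C \<and> dominated S = T \<and>
             card T + (k - k div 2) \<le> (k - 1) * length S + 2"
proof -
  have xV: "x \<in> V" and yV: "y \<in> V" using x y C_subset_V by auto
  have "N y - N x \<noteq> {}" using nbhd_eq_of_subset[OF yV xV] \<open>N x \<noteq> N y\<close> by blast
  moreover have "N y \<inter> N x \<noteq> {}" using close degree_ge_3 by (auto simp: Int_commute)
  ultimately have start: "admissible [x, y]"
    using admissible_snoc[of "[x]" y] admissible_singleton[OF x] yV y \<open>N x \<noteq> N y\<close>
    by (auto simp: dominated_def)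
  define P where "P S \<longleftrightarrow> admissible S \<and> take 2 S = [x, y]" for S
  obtain S where "P S" and longest: "\<And>S'. P S' \<Longrightarrow> length S' \<le> length S"
    using exists_longest_admissible[of P "[x, y]"] start by (auto simp: P_def)
  then obtain R where adm: "admissible (x # y # R)" and S: "S = x # y # R"
    by (metis P_def append_Cons append_Nil append_take_drop_id)
  have "\<not> admissible (S @ [z])" for z
    using longest[of "S @ [z]"] by (auto simp: P_def S)
  then have dom: "dominated S = T"
    using maximal_admissible_dominates_T adm S by blast
  have "card (dominated ([x, y] @ R)) \<le> card (dominated [x, y]) + (k - 1) * length R"
    using adm C_subset_V by (intro card_dominated_overlapping) (auto simp: admissible_def)
  moreover have "card (dominated [x, y]) = card (N x) + (card (N y) - card (N y \<inter> N x))"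
    using card_dominated_snoc[of "[x]" y] finite_nbhd
    by (simp add: dominated_def card_Diff_subset_Int)
  ultimately have "card T \<le> k + k div 2 + (k - 1) * length R"
    using dom S close card_nbhd[OF xV] card_nbhd[OF yV] by (simp add: Int_commute)
  then have "card T + (k - k div 2) \<le> (k - 1) * length S + 2"
    using bound_shift_ceiling_half degree_ge_3 S by simp
  then show ?thesis using adm dom unfolding S admissible_def by blast
qed

text \<open>Otherwise w could be inserted just before the last vertex l.\<close>
lemma private_nbhd_subset_of_meeting:
  assumes adm: "admissible (S @ [l])" and dom: "dominated (S @ [l]) = T"
    and blocked: "\<And>w. \<not> admissible (S @ [w, l])"
    and w: "w \<in> C" and meets: "N w \<inter> (N l - dominated S) \<noteq> {}"
  shows "N l - dominated S \<subseteq> N w"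
proof (rule ccontr)
  assume not_subset: "\<not> N l - dominated S \<subseteq> N w"
  have S: "admissible S" "l \<notin> set S" "l \<in> V" "l \<in> C" using adm admissible_snoc by auto
  have wV: "w \<in> V" using w C_subset_V by blast
  have "\<not> N w \<subseteq> N l" using nbhd_eq_of_subset[OF wV S(3)] not_subset by blast
  then have "N w \<inter> dominated S \<noteq> {}" using nbhd_C[OF w] dom by (auto simp: dominated_snoc)
  moreover have "N w - dominated S \<noteq> {}" "w \<notin> set S"
    using meets nbhd_subset_dominated by blast+
  ultimately have "admissible (S @ [w])" using admissible_snoc S(1) wV w by blast
  moreover have "l \<noteq> w" "N l - dominated (S @ [w]) \<noteq> {}" "N l \<inter> dominated (S @ [w]) \<noteq> {}"
    using not_subset meets by (auto simp: dominated_snoc)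
  ultimately have "admissible ((S @ [w]) @ [l])"
    using admissible_snoc[of "S @ [w]" l] S(2-4) by auto
  with blocked show False by simp
qed

text \<open>If the private neighbourhood F of l is large, every neighbour of a vertex of F contains F,
  so any two of them share at least \<lceil>k/2\<rceil> neighbours and hence are twins.\<close>
lemma private_nbhd_of_last_small:
  assumes conn: "connected_graph V E" and not_Kkk: "\<not> is_complete_bipartite_kk V E k"
    and far: "\<And>x y. x \<in> C \<Longrightarrow> y \<in> C \<Longrightarrow> N x \<noteq> N y \<Longrightarrow> card (N x \<inter> N y) < k - k div 2"
    and adm: "admissible (S @ [l])" and dom: "dominated (S @ [l]) = T"
    and blocked: "\<And>w. \<not> admissible (S @ [w, l])"
  shows "card (N l - dominated S) \<le> k div 2"
proof (rule ccontr)
  define F where "F = N l - dominated S"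
  assume "\<not> card (N l - dominated S) \<le> k div 2"
  then have big: "k - k div 2 \<le> card F" by (simp add: F_def)
  then obtain u where u: "u \<in> F" using degree_ge_3 by fastforce
  have uT: "u \<in> T" using u dom by (auto simp: F_def dominated_snoc)
  have nbhd_u_C: "w \<in> C" if "w \<in> N u" for w using that edge_T uT mem_nbhd_iff by blast
  have F_subset: "F \<subseteq> N w" if "w \<in> N u" for w
    using private_nbhd_subset_of_meeting[OF adm dom blocked nbhd_u_C[OF that]]
      that u edge_sym mem_nbhd_iff unfolding F_def by blast
  have twins: "N w = N w'" if "w \<in> N u" "w' \<in> N u" for w w'
  proof (rule ccontr)
    assume "N w \<noteq> N w'"
    have "card F \<le> card (N w \<inter> N w')"
      using F_subset[OF that(1)] F_subset[OF that(2)] finite_nbhd by (intro card_mono) auto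
    then show False using far[OF nbhd_u_C[OF that(1)] nbhd_u_C[OF that(2)] \<open>N w \<noteq> N w'\<close>] big
      by linarith
  qed
  have uV: "u \<in> V" using uT T_subset_V by blast
  then obtain w where "w \<in> N u" using nbhd_nonempty by blast
  with complete_bipartite_of_twin_nbhd[OF conn uV] twins not_Kkk show False by blast
qed

lemma sequence_without_close_pair:
  assumes conn: "connected_graph V E" and not_Kkk: "\<not> is_complete_bipartite_kk V E k"
    and far: "\<And>x y. x \<in> C \<Longrightarrow> y \<in> C \<Longrightarrow> N x \<noteq> N y \<Longrightarrow> card (N x \<inter> N y) < k - k div 2"
  shows "\<exists>S. legal_sequence V E S \<and> set S \<subseteq> C \<and> dominated S = T \<and>
             card T + (k - k div 2) \<le> (k - 1) * length S + 2"
proof -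
  obtain t where t: "t \<in> T" using T_nonempty by blast
  then obtain x where "x \<in> N t" using nbhd_nonempty T_subset_V by blast
  then have x: "x \<in> C" using edge_T t mem_nbhd_iff by blast
  define P where "P S \<longleftrightarrow> admissible S \<and> S \<noteq> []" for S
  obtain S where "P S" and longest: "\<And>S'. P S' \<Longrightarrow> length S' \<le> length S"
    using exists_longest_admissible[of P "[x]"] admissible_singleton[OF x] by (auto simp: P_def)
  then have adm: "admissible S" and "S \<noteq> []" by (auto simp: P_def)
  have "\<not> admissible (S @ [z])" for z using longest[of "S @ [z]"] by (auto simp: P_def)
  then have dom: "dominated S = T"
    using maximal_admissible_dominates_T adm \<open>S \<noteq> []\<close> by blast
  obtain S' l where S: "S = S' @ [l]" using \<open>S \<noteq> []\<close> by (metis rev_exhaust)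
  have "\<not> admissible (S' @ [w, l])" for w using longest[of "S' @ [w, l]"] by (auto simp: P_def S)
  then have small: "card (N l - dominated S') \<le> k div 2"
    using private_nbhd_of_last_small[OF conn not_Kkk far] adm dom S by blast
  have adm': "admissible S'" and lV: "l \<in> V" using adm S admissible_snoc by blast+
  have "S' \<noteq> []"
    using small card_nbhd[OF lV] degree_ge_3 by (cases S') auto
  then obtain s R where S': "S' = [s] @ R" by (cases S') auto
  have sV: "s \<in> V" and RV: "set R \<subseteq> V"
    using adm' C_subset_V S' by (auto simp: admissible_def)
  have "card (dominated ([s] @ R)) \<le> card (dominated [s]) + (k - 1) * length R"
    using adm' S' RV by (intro card_dominated_overlapping) (auto simp: admissible_def)
  then have "card T \<le> k + k div 2 + (k - 1) * length R"
    using card_dominated_snoc[of S' l] dom small card_nbhd[OF sV] S S'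
    by (simp add: dominated_def)
  then have "card T + (k - k div 2) \<le> (k - 1) * length S + 2"
    using bound_shift_ceiling_half degree_ge_3 S S' by simp
  then show ?thesis using adm dom unfolding admissible_def by blast
qed

lemma exists_dominating_sequence:
  assumes "connected_graph V E" and "\<not> is_complete_bipartite_kk V E k"
  obtains S where "legal_sequence V E S" "set S \<subseteq> C" "dominated S = T"
    "card T + (k - k div 2) \<le> (k - 1) * length S + 2"
  using sequence_from_close_pair sequence_without_close_pair[OF assms] that
  by (meson not_le)

end

context regular_graph
begin

lemma dominating_side_nonbipartite:
  assumes "connected_graph V E" and "\<not> bipartite V E"
  shows "dominating_side V E k V V"
proof unfold_locales
  show "V \<noteq> {}" using assms(1) by (simp add: connected_graph_def)
  show "N x \<subseteq> V" for x by (rule nbhd_subset_V)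
  show "w \<in> V" if "E t w" for t w using that edge_in_V by blast
  show "parity_walk d True t" if "d \<in> V" "t \<in> V" for d t
    using nonbipartite_even_walk assms that by blast
qed simp_all

lemma dominating_side_parity_class:
  assumes "d \<in> V"
  shows "dominating_side V E k {v. parity_walk d b v} {v. parity_walk d (\<not> b) v}"
proof unfold_locales
  show "{v. parity_walk d b v} \<subseteq> V" "{v. parity_walk d (\<not> b) v} \<subseteq> V"
    using parity_walk_in_V assms by auto
  obtain w where "w \<in> N d" using nbhd_nonempty assms by blast
  then have "parity_walk d False w" using parity_walk_edge mem_nbhd_iff by blast
  then show "{v. parity_walk d (\<not> b) v} \<noteq> {}" using parity_walk.refl by (cases b) auto
  show "N x \<subseteq> {v. parity_walk d (\<not> b) v}" if "x \<in> {v. parity_walk d b v}" for x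
    using that parity_walk.step by (auto simp: mem_nbhd_iff)
  show "w \<in> {v. parity_walk d b v}" if "t \<in> {v. parity_walk d (\<not> b) v}" "E t w" for t w
    using parity_walk.step[OF _ that(2), of d "\<not> b"] that(1) by simp
  show "parity_walk t True t'"
    if "t \<in> {v. parity_walk d (\<not> b) v}" "t' \<in> {v. parity_walk d (\<not> b) v}" for t t'
    using parity_walk_trans[OF parity_walk_sym] that by fastforce
qed

lemma total_grundy_dom_nonbipartite:
  assumes conn: "connected_graph V E" and "\<not> bipartite V E"
    and not_Kkk: "\<not> is_complete_bipartite_kk V E k"
  shows "card V + (k - k div 2) \<le> (k - 1) * total_grundy_dom V E + 2"
proof -
  interpret dominating_side V E k V V
    using dominating_side_nonbipartite[OF conn \<open>\<not> bipartite V E\<close>] .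
  obtain S where S: "legal_sequence V E S" "set S \<subseteq> V" "dominated S = V"
    and bound: "card V + (k - k div 2) \<le> (k - 1) * length S + 2"
    by (rule exists_dominating_sequence[OF conn not_Kkk])
  have "total_dominating_sequence V E S" using S(1,3) by (rule total_dominating_sequenceI)
  then have "length S \<le> total_grundy_dom V E" by (rule length_le_total_grundy_dom)
  then have "(k - 1) * length S \<le> (k - 1) * total_grundy_dom V E" by (rule mult_le_mono2)
  then show ?thesis using bound by linarith
qed

text \<open>The sequences for the two colour classes dominate disjoint sets, so their concatenation
  is still legal.\<close>
lemma total_grundy_dom_bipartite:
  assumes conn: "connected_graph V E" and "bipartite V E"
    and not_Kkk: "\<not> is_complete_bipartite_kk V E k"
  shows "card V + 2 * (k - k div 2) \<le> (k - 1) * total_grundy_dom V E + 4"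
proof -
  obtain d where d: "d \<in> V" using conn by (auto simp: connected_graph_def)
  define P where "P b = {v. parity_walk d b v}" for b
  obtain S1 where S1: "legal_sequence V E S1" "set S1 \<subseteq> P False" "dominated S1 = P True"
    "card (P True) + (k - k div 2) \<le> (k - 1) * length S1 + 2"
    using dominating_side.exists_dominating_sequence[OF dominating_side_parity_class[OF d, of False]
        conn not_Kkk]
    unfolding P_def by auto
  obtain S2 where S2: "legal_sequence V E S2" "set S2 \<subseteq> P True" "dominated S2 = P False"
    "card (P False) + (k - k div 2) \<le> (k - 1) * length S2 + 2"
    using dominating_side.exists_dominating_sequence[OF dominating_side_parity_class[OF d, of True]
        conn not_Kkk]
    unfolding P_def by auto
  obtain A where A: "\<And>u v. E u v \<Longrightarrow> u \<in> A \<longleftrightarrow> v \<notin> A"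
    using \<open>bipartite V E\<close> by (auto simp: bipartite_def)
  have "v \<in> A \<longleftrightarrow> (d \<in> A \<longleftrightarrow> b)" if "v \<in> P b" for v b
    using parity_walk_bipartite[OF A] that by (simp add: P_def)
  then have disjoint: "P True \<inter> P False = {}" by blast
  have V: "V = P True \<union> P False"
  proof
    show "V \<subseteq> P True \<union> P False"
    proof
      fix v assume "v \<in> V"
      then obtain b where "parity_walk d b v" using connected_parity_walk[OF conn d] by blast
      then show "v \<in> P True \<union> P False" by (cases b) (auto simp: P_def)
    qed
    show "P True \<union> P False \<subseteq> V" using parity_walk_in_V d by (auto simp: P_def)
  qed
  have "legal_sequence V E (S1 @ S2)"
    using legal_sequence_append S1 S2 disjoint by blast
  moreover have "dominated (S1 @ S2) = V"
    unfolding dominated_append S1(3) S2(3) using V by (rule sym)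
  ultimately have "length (S1 @ S2) \<le> total_grundy_dom V E"
    by (intro length_le_total_grundy_dom total_dominating_sequenceI)
  then have "(k - 1) * (length S1 + length S2) \<le> (k - 1) * total_grundy_dom V E"
    by (simp add: mult_le_mono2)
  moreover have "card V = card (P True) + card (P False)"
    using V disjoint finite_V by (metis card_Un_disjoint finite_Un)
  ultimately show ?thesis
    using S1(4) S2(4) distrib_left[of "k - 1" "length S1" "length S2"] by linarith
qed

end

theorem mainTheorem13:
  fixes V :: "'a set" and E :: "'a \<Rightarrow> 'a \<Rightarrow> bool" and k :: nat
  assumes "simple_graph V E"
    and "k \<ge> 3"
    and "regular V E k"
    and "connected_graph V E"
    and "\<not> is_complete_bipartite_kk V E k"
  shows "(\<not> bipartite V E \<longrightarrow>
            real (total_grundy_dom V E) \<ge> (real (card V) + real (nat \<lceil>real k / 2\<rceil>) - 2) / (real k - 1))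
       \<and> (bipartite V E \<longrightarrow>
            real (total_grundy_dom V E) \<ge> (real (card V) + 2 * real (nat \<lceil>real k / 2\<rceil>) - 4) / (real k - 1))"
proof -
  interpret regular_graph V E k using assms(1-3) by unfold_locales
  have k: "k \<ge> 2" using assms(2) by simp
  show ?thesis
    unfolding nat_ceiling_half
  proof (intro conjI impI)
    assume "\<not> bipartite V E"
    from real_bound_of_nat_bound[OF total_grundy_dom_nonbipartite[OF assms(4) this assms(5)] order_refl k]
    show "real (total_grundy_dom V E) \<ge> (real (card V) + real (k - k div 2) - 2) / (real k - 1)"
      by simp
  next
    assume "bipartite V E"
    from real_bound_of_nat_bound[OF total_grundy_dom_bipartite[OF assms(4) this assms(5)] order_refl k]
    show "real (total_grundy_dom V E) \<ge> (real (card V) + 2 * real (k - k div 2) - 4) / (real k - 1)"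
      by simp
  qed
qed

end
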